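(* Let $n\ge1$, $k=\lfloor n/2\rfloor$, and let $T=(t_{ij})_{i,j=1}^n$ be the $n\times n$ matrix over the polynomial ring $\mathbb C[x_1,\dots,x_n]$ with $t_{ii}=0$, $t_{ij}=x_j$ for $i<j$ and $t_{ij}=-x_j$ for $i>j$. Then $$\det(\lambda\,\mathrm{Id}-T)=\lambda^n+\sigma_2\lambda^{n-2}+\sigma_4\lambda^{n-4}+\dots+\sigma_{2k}\lambda^{n-2k},$$ where $\sigma_r=\sum_{i_1<\dots<i_r}x_{i_1}\cdots x_{i_r}$ is the $r$-th elementary symmetric polynomial.
   Context: $\lambda$ is an indeterminate; the determinant is taken in $\mathbb C[x_1,\dots,x_n][\lambda]$. *)

theory Defs
  imports "Jordan_Normal_Form.Char_Poly"
begin

definition Tmat :: "nat \<Rightarrow> (nat \<Rightarrow> 'a::comm_ring_1) \<Rightarrow> 'a mat" where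
  "Tmat n x = mat n n (\<lambda>(i,j). if i < j then x j else if j < i then - x j else 0)"

definition esym :: "nat \<Rightarrow> (nat \<Rightarrow> 'a::comm_ring_1) \<Rightarrow> nat \<Rightarrow> 'a" where
  "esym n x r = (\<Sum>S \<in> {S. S \<subseteq> {0..<n} \<and> card S = r}. \<Prod>i\<in>S. x i)"

end

theory Submission
  imports Defs
begin

text \<open>
  Write \<open>D\<^sub>m\<close> for the characteristic polynomial of the \<open>m \<times> m\<close> matrix \<open>T\<close> and
  \<open>P\<^sub>m = \<Prod>\<^sub>i\<^sub><\<^sub>m (\<lambda> - x\<^sub>i)\<close>. In \<open>\<lambda> Id - T\<close> of size \<open>m + 1\<close> the last column is
  \<open>-x\<^sub>m\<close> above the diagonal entry \<open>\<lambda>\<close>, so Laplace expansion along it gives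
  \<open>D\<^sub>m\<^sub>+\<^sub>1 = \<lambda> D\<^sub>m - x\<^sub>m (C - D\<^sub>m)\<close>, where \<open>C\<close> is the sum of the cofactors of that column.
  \<open>C\<close> is the determinant of the matrix with its last column replaced by ones; subtracting the last
  row from all others leaves a triangular matrix with diagonal \<open>\<lambda> - x\<^sub>i\<close>, so \<open>C = P\<^sub>m\<close>.
  Splitting \<open>P\<^sub>m = E\<^sub>m - O\<^sub>m\<close> by Vieta into the terms \<open>\<sigma>\<^sub>r \<lambda>\<^sup>m\<^sup>-\<^sup>r\<close> with \<open>r\<close> even and odd,
  \<open>E\<^sub>m\<^sub>+\<^sub>1 = \<lambda> E\<^sub>m + x\<^sub>m O\<^sub>m\<close> is the same recurrence, hence \<open>D\<^sub>m = E\<^sub>m\<close>.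
\<close>

lemma esym_0 [simp]: "esym m x 0 = 1"
proof -
  have "{S. S \<subseteq> {0..<m} \<and> card S = 0} = {{}}"
    by (auto dest: finite_subset[OF _ finite_atLeastLessThan])
  then show ?thesis
    by (simp add: esym_def)
qed

lemma esym_eq_0_if_gt:
  assumes "m < r"
  shows "esym m x r = 0"
proof -
  have "card S \<le> m" if "S \<subseteq> {0..<m}" for S
    using card_mono[OF finite_atLeastLessThan that] by simp
  then have empty: "{S. S \<subseteq> {0..<m} \<and> card S = r} = {}"
    using assms leD by blast
  show ?thesis
    unfolding esym_def empty by simp
qed

lemma esym_Suc: "esym (Suc m) x (Suc r) = esym m x (Suc r) + x m * esym m x r"
proof -
  let ?S = "\<lambda>k. {S. S \<subseteq> {0..<m} \<and> card S = k}"
  have fin: "finite (?S k)" for k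
    by (rule finite_subset[of _ "Pow {0..<m}"]) auto
  have split: "{S. S \<subseteq> {0..<Suc m} \<and> card S = Suc r} = ?S (Suc r) \<union> insert m ` ?S r"
  proof (intro equalityI subsetI)
    fix S assume S: "S \<in> {S. S \<subseteq> {0..<Suc m} \<and> card S = Suc r}"
    then have "finite S"
      using finite_subset by blast
    show "S \<in> ?S (Suc r) \<union> insert m ` ?S r"
    proof (cases "m \<in> S")
      case True
      then have "S = insert m (S - {m})" and "S - {m} \<in> ?S r"
        using S \<open>finite S\<close> by auto
      then show ?thesis by blast
    next
      case False
      then show ?thesis using S by (auto simp: less_Suc_eq)
    qed
  next
    fix S assume "S \<in> ?S (Suc r) \<union> insert m ` ?S r"
    then consider "S \<in> ?S (Suc r)" | T where "T \<in> ?S r" "S = insert m T"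
      by blast
    then show "S \<in> {S. S \<subseteq> {0..<Suc m} \<and> card S = Suc r}"
    proof cases
      case (2 T)
      then have "finite T" "m \<notin> T"
        using finite_subset[OF _ finite_atLeastLessThan] by auto
      moreover have "insert m T \<subseteq> {0..<Suc m}"
        using 2 by auto
      ultimately show ?thesis
        using 2 by simp
    qed auto
  qed
  have inj: "inj_on (insert m) (?S r)"
    by (rule inj_onI) (metis atLeastLessThan_iff insert_ident less_irrefl mem_Collect_eq subsetD)
  have "esym (Suc m) x (Suc r) = esym m x (Suc r) + (\<Sum>S\<in>?S r. \<Prod>i\<in>insert m S. x i)"
    unfolding esym_def split
    by (subst sum.union_disjoint) (auto simp: fin sum.reindex[OF inj])
  also have "(\<Sum>S\<in>?S r. \<Prod>i\<in>insert m S. x i) = x m * esym m x r"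
    unfolding esym_def sum_distrib_left
  proof (rule sum.cong)
    fix S assume "S \<in> ?S r"
    then have "finite S" "m \<notin> S"
      using finite_subset[OF _ finite_atLeastLessThan] by auto
    then show "(\<Prod>i\<in>insert m S. x i) = x m * (\<Prod>i\<in>S. x i)"
      by simp
  qed simp
  finally show ?thesis .
qed

definition weighted_esym_poly :: "nat \<Rightarrow> (nat \<Rightarrow> 'a::comm_ring_1) \<Rightarrow> (nat \<Rightarrow> 'a) \<Rightarrow> 'a poly" where
  "weighted_esym_poly m x c = (\<Sum>r\<le>m. monom (c r * esym m x r) (m - r))"

lemma weighted_esym_poly_0 [simp]: "weighted_esym_poly 0 x c = [:c 0:]"
  by (simp add: weighted_esym_poly_def monom_0)

lemma weighted_esym_poly_Suc:
  "weighted_esym_poly (Suc m) x c =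
     [:0, 1:] * weighted_esym_poly m x c + Polynomial.smult (x m) (weighted_esym_poly m x (\<lambda>r. c (Suc r)))"
proof -
  have "weighted_esym_poly (Suc m) x c =
      monom (c 0) (Suc m) + (\<Sum>r\<le>m. monom (c (Suc r) * esym m x (Suc r)) (m - r))
      + Polynomial.smult (x m) (weighted_esym_poly m x (\<lambda>r. c (Suc r)))"
    unfolding weighted_esym_poly_def sum.atMost_Suc_shift[of _ m] esym_Suc smult_sum2
      add.assoc sum.distrib[symmetric]
    by (simp add: add_monom smult_monom algebra_simps)
  also have "monom (c 0) (Suc m) + (\<Sum>r\<le>m. monom (c (Suc r) * esym m x (Suc r)) (m - r))
      = (\<Sum>r\<le>Suc m. monom (c r * esym m x r) (Suc m - r))"
    by (subst sum.atMost_Suc_shift) simp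
  also have "\<dots> = (\<Sum>r\<le>m. monom (c r * esym m x r) (Suc m - r))"
    by (simp add: esym_eq_0_if_gt)
  also have "\<dots> = [:0, 1:] * weighted_esym_poly m x c"
    unfolding weighted_esym_poly_def sum_distrib_left
    by (rule sum.cong) (auto simp: Suc_diff_le monom_Suc)
  finally show ?thesis .
qed

lemma prod_linear_factors_eq_even_minus_odd:
  "(\<Prod>i<m. [:- x i, 1:]) =
     weighted_esym_poly m x (\<lambda>r. of_bool (even r)) - weighted_esym_poly m x (\<lambda>r. of_bool (odd r))"
proof (induction m)
  case (Suc m)
  show ?case
    unfolding prod.lessThan_Suc Suc weighted_esym_poly_Suc
    by (simp add: algebra_simps)
qed simp

lemma even_weighted_esym_poly:
  "weighted_esym_poly n x (\<lambda>r. of_bool (even r)) = (\<Sum>j = 0..n div 2. monom (esym n x (2 * j)) (n - 2 * j))"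
proof -
  have "weighted_esym_poly n x (\<lambda>r. of_bool (even r)) = (\<Sum>r\<in>{r\<in>{..n}. even r}. monom (esym n x r) (n - r))"
    unfolding weighted_esym_poly_def by (subst sum.inter_filter) (auto intro!: sum.cong)
  also have "{r\<in>{..n}. even r} = (\<lambda>j. 2 * j) ` {0..n div 2}"
    by (auto simp: image_iff elim!: evenE)
  finally show ?thesis
    by (simp add: sum.reindex inj_on_def)
qed

lemma det_replace_col_eq_sum_cofactor:
  fixes A :: "'a::comm_ring_1 mat"
  assumes A: "A \<in> carrier_mat n n" and k: "k < n"
  shows "det (mat n n (\<lambda>(i, j). if j = k then v i else A $$ (i, j))) = (\<Sum>i<n. v i * cofactor A i k)"
proof -
  let ?B = "mat n n (\<lambda>(i, j). if j = k then v i else A $$ (i, j))"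
  have "mat_delete ?B i k = mat_delete A i k" for i
    by (rule eq_matI) (use A in \<open>auto simp: mat_delete_def\<close>)
  then have "cofactor ?B i k = cofactor A i k" for i
    by (simp add: cofactor_def)
  then show ?thesis
    using laplace_expansion_column[of ?B n k] k by simp
qed

lemma det_subtract_last_row:
  fixes B :: "'a::comm_ring_1 mat"
  assumes B: "B \<in> carrier_mat (Suc m) (Suc m)"
  shows "det (mat (Suc m) (Suc m) (\<lambda>(i, j). if i = m then B $$ (i, j) else B $$ (i, j) - B $$ (m, j)))
    = det B" (is "det ?R = _")
proof -
  define E :: "'a mat" where
    "E = mat (Suc m) (Suc m) (\<lambda>(i, j). if i = j then 1 else if j = m then -1 else 0)"
  have E: "E \<in> carrier_mat (Suc m) (Suc m)"
    by (simp add: E_def)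
  have "upper_triangular E"
    by (auto simp: upper_triangular_def E_def)
  then have "det E = 1"
    using det_upper_triangular[OF _ E] by (simp add: prod_list_diag_prod E_def)
  moreover have "E * B = ?R"
  proof (rule eq_matI)
    fix i j assume ij: "i < dim_row ?R" "j < dim_col ?R"
    have "(E * B) $$ (i, j) = (\<Sum>k<Suc m. E $$ (i, k) * B $$ (k, j))"
      using ij B E by (simp add: scalar_prod_def atLeast0LessThan)
    also have "\<dots> = (\<Sum>k<Suc m. (if k = i then B $$ (k, j) else 0) - (if k = m \<and> i \<noteq> m then B $$ (k, j) else 0))"
      by (rule sum.cong) (use ij in \<open>auto simp: E_def\<close>)
    finally show "(E * B) $$ (i, j) = ?R $$ (i, j)"
      using ij by (simp add: sum_subtractf)
  qed (use B E in auto)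
  ultimately show ?thesis
    using det_mult[OF E B] by simp
qed

lemma det_last_col_zero_except_corner:
  fixes B :: "'a::comm_ring_1 mat"
  assumes B: "B \<in> carrier_mat (Suc m) (Suc m)" and zero: "\<And>i. i < m \<Longrightarrow> B $$ (i, m) = 0"
  shows "det B = B $$ (m, m) * det (mat_delete B m m)"
  using laplace_expansion_column[OF B, of m] zero by (simp add: cofactor_def)

lemma char_poly_matrix_Tmat_index:
  assumes "i < n" "j < n"
  shows "char_poly_matrix (Tmat n x) $$ (i, j) =
    (if i = j then [:0, 1:] else if i < j then [:- x j:] else [:x j:])"
  using assms by (auto simp: char_poly_matrix_def Tmat_def)

lemma mat_delete_char_poly_matrix_Tmat:
  "mat_delete (char_poly_matrix (Tmat (Suc m) x)) m m = char_poly_matrix (Tmat m x)"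
  by (rule eq_matI) (auto simp: mat_delete_def char_poly_matrix_def Tmat_def)

lemma sum_cofactor_last_col_char_poly_matrix_Tmat:
  fixes m :: nat and x :: "nat \<Rightarrow> 'a::comm_ring_1"
  defines "M \<equiv> char_poly_matrix (Tmat (Suc m) x)"
  shows "(\<Sum>i<Suc m. cofactor M i m) = (\<Prod>i<m. [:- x i, 1:])"
proof -
  have M: "M \<in> carrier_mat (Suc m) (Suc m)"
    by (simp add: M_def Tmat_def)
  have M_index: "\<And>i j. i < Suc m \<Longrightarrow> j < Suc m \<Longrightarrow> M $$ (i, j) =
      (if i = j then [:0, 1:] else if i < j then [:- x j:] else [:x j:])"
    unfolding M_def by (rule char_poly_matrix_Tmat_index)
  define M1 where "M1 = mat (Suc m) (Suc m) (\<lambda>(i, j). if j = m then 1 else M $$ (i, j))"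
  define M2 where "M2 = mat (Suc m) (Suc m)
    (\<lambda>(i, j). if i = m then M1 $$ (i, j) else M1 $$ (i, j) - M1 $$ (m, j))"
  define Q where "Q = mat m m (\<lambda>(i, j). M $$ (i, j) - M $$ (m, j))"
  have M1: "M1 \<in> carrier_mat (Suc m) (Suc m)"
    by (simp add: M1_def)
  have "(\<Sum>i<Suc m. cofactor M i m) = det M1"
    using det_replace_col_eq_sum_cofactor[OF M, of m "\<lambda>_. 1"] by (simp add: M1_def)
  also have "\<dots> = det M2"
    unfolding M2_def by (rule det_subtract_last_row[OF M1, symmetric])
  also have "\<dots> = det (mat_delete M2 m m)"
    by (subst det_last_col_zero_except_corner) (auto simp: M2_def M1_def)
  also have "mat_delete M2 m m = Q"
    by (rule eq_matI) (auto simp: mat_delete_def M2_def M1_def Q_def)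
  also have "det Q = (\<Prod>i<m. [:- x i, 1:])"
  proof -
    have "upper_triangular Q"
      by (auto simp: upper_triangular_def Q_def M_index)
    then show ?thesis
      using det_upper_triangular[of Q m]
      by (simp add: prod_list_diag_prod Q_def M_index atLeast0LessThan)
  qed
  finally show ?thesis .
qed

lemma char_poly_Tmat_Suc:
  fixes x :: "nat \<Rightarrow> 'a::comm_ring_1"
  shows "char_poly (Tmat (Suc m) x) =
    [:0, 1:] * char_poly (Tmat m x) - [:x m:] * ((\<Prod>i<m. [:- x i, 1:]) - char_poly (Tmat m x))"
proof -
  define M where "M = char_poly_matrix (Tmat (Suc m) x)"
  have M: "M \<in> carrier_mat (Suc m) (Suc m)"
    by (simp add: M_def Tmat_def)
  have cofactor_mm: "cofactor M m m = char_poly (Tmat m x)"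
    by (simp add: cofactor_def M_def mat_delete_char_poly_matrix_Tmat char_poly_def)
  have "char_poly (Tmat (Suc m) x) = (\<Sum>i<Suc m. M $$ (i, m) * cofactor M i m)"
    unfolding char_poly_def M_def[symmetric] by (rule laplace_expansion_column[OF M]) simp
  also have "\<dots> = [:0, 1:] * cofactor M m m - [:x m:] * (\<Sum>i<m. cofactor M i m)"
    by (simp add: M_def char_poly_matrix_Tmat_index sum_distrib_left sum_negf)
  also have "(\<Sum>i<m. cofactor M i m) = (\<Prod>i<m. [:- x i, 1:]) - cofactor M m m"
    using sum_cofactor_last_col_char_poly_matrix_Tmat[of m x] by (simp add: M_def eq_diff_eq)
  finally show ?thesis
    by (simp add: cofactor_mm)
qed

lemma char_poly_Tmat_eq_even_part:
  fixes x :: "nat \<Rightarrow> 'a::comm_ring_1"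
  shows "char_poly (Tmat m x) = weighted_esym_poly m x (\<lambda>r. of_bool (even r))"
proof (induction m)
  case 0
  have "char_poly_matrix (Tmat 0 x) \<in> carrier_mat 0 0"
    by (simp add: Tmat_def)
  then show ?case
    by (simp add: char_poly_def det_def)
next
  case (Suc m)
  show ?case
    unfolding char_poly_Tmat_Suc Suc prod_linear_factors_eq_even_minus_odd weighted_esym_poly_Suc
    by (simp add: algebra_simps)
qed

theorem lemma5p5:
  fixes n :: nat and x :: "nat \<Rightarrow> 'a::comm_ring_1"
  assumes "n \<ge> 1"
  shows "char_poly (Tmat n x) =
    (\<Sum>j = 0..n div 2. monom (esym n x (2 * j)) (n - 2 * j))"
  unfolding char_poly_Tmat_eq_even_part even_weighted_esym_poly ..

end
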